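(* Let $(t,\mu,\eta)$ be a pre-monad on a 0-cell $k$ in a 2-category $\mathcal K$. (1) The 2-cell $\mu\ast\eta t:t\Rightarrow t$ is idempotent. (2) Suppose there are a 1-cell $\widehat t:k\to k$ and 2-cells $\pi:t\Rightarrow\widehat t$ and $\iota:\widehat t\Rightarrow t$ with $\mu\ast\eta t=\iota\ast\pi$ and $\pi\ast\iota=\widehat t$ (the identity 2-cell). Then $(\widehat t,\ \widehat\mu:=\pi\ast\mu\ast\iota\iota,\ \widehat\eta:=\pi\ast\eta)$ is a monad in $\mathcal K$.
   Context: Conventions in a 2-category $\mathcal K$: horizontal composition and whiskering by juxtaposition in the order of functor composition; identity 1-cell of $k$ written $k$, identity 2-cell of $t$ written $t$; vertical composition $\ast$ with $\alpha\ast\beta$ meaning $\beta$ then $\alpha$; $\iota\iota$ denotes the horizontal composite of $\iota$ with itself. A pre-monad in $\mathcal K$ is a triple $(t,\mu,\eta)$ with $t:k\to k$ a 1-cell and $\mu:tt\Rightarrow t$, $\eta:k\Rightarrow t$ 2-cells satisfying $\mu\ast\mu t=\mu\ast t\mu$, $\mu\ast\eta t=\mu\ast t\eta$, $\mu\ast\eta\eta=\eta$ and $\mu\ast\mu t\ast\eta tt=\mu$. A monad is such a triple with $\mu$ associative and $\mu\ast\eta t=t=\mu\ast t\eta$. *)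

theory Defs
  imports Main
begin

text \<open>Conventions: comp1 g f is g after f; hcomp a b is the horizontal
composite in the order of functor composition (a after b); vcomp a b is
b then a.  Whiskering a 2-cell a by a 1-cell f is hcomp a (id2 f) or
hcomp (id2 f) a.\<close>

record ('o, 'a, 'c) two_cat =
  obs   :: "'o set"
  arrs  :: "'a set"
  cells :: "'c set"
  src   :: "'a \<Rightarrow> 'o"
  trg   :: "'a \<Rightarrow> 'o"
  id1   :: "'o \<Rightarrow> 'a"
  comp1 :: "'a \<Rightarrow> 'a \<Rightarrow> 'a"
  dom2  :: "'c \<Rightarrow> 'a"
  cod2  :: "'c \<Rightarrow> 'a"
  id2   :: "'a \<Rightarrow> 'c"
  vcomp :: "'c \<Rightarrow> 'c \<Rightarrow> 'c"
  hcomp :: "'c \<Rightarrow> 'c \<Rightarrow> 'c"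

definition two_category :: "('o, 'a, 'c, 'z) two_cat_scheme \<Rightarrow> bool" where
  "two_category K \<longleftrightarrow>
    \<comment> \<open>1-cells form a category\<close>
    (\<forall>f\<in>arrs K. src K f \<in> obs K \<and> trg K f \<in> obs K) \<and>
    (\<forall>x\<in>obs K. id1 K x \<in> arrs K \<and> src K (id1 K x) = x \<and> trg K (id1 K x) = x) \<and>
    (\<forall>f\<in>arrs K. \<forall>g\<in>arrs K. src K g = trg K f \<longrightarrow>
        comp1 K g f \<in> arrs K \<and> src K (comp1 K g f) = src K f \<and> trg K (comp1 K g f) = trg K g) \<and>
    (\<forall>f\<in>arrs K. comp1 K (id1 K (trg K f)) f = f \<and> comp1 K f (id1 K (src K f)) = f) \<and>
    (\<forall>f\<in>arrs K. \<forall>g\<in>arrs K. \<forall>h\<in>arrs K. src K g = trg K f \<longrightarrow> src K h = trg K g \<longrightarrow>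
        comp1 K h (comp1 K g f) = comp1 K (comp1 K h g) f) \<and>
    \<comment> \<open>2-cells: typing and vertical category structure\<close>
    (\<forall>a\<in>cells K. dom2 K a \<in> arrs K \<and> cod2 K a \<in> arrs K \<and>
        src K (dom2 K a) = src K (cod2 K a) \<and> trg K (dom2 K a) = trg K (cod2 K a)) \<and>
    (\<forall>f\<in>arrs K. id2 K f \<in> cells K \<and> dom2 K (id2 K f) = f \<and> cod2 K (id2 K f) = f) \<and>
    (\<forall>a\<in>cells K. \<forall>b\<in>cells K. dom2 K a = cod2 K b \<longrightarrow>
        vcomp K a b \<in> cells K \<and> dom2 K (vcomp K a b) = dom2 K b \<and> cod2 K (vcomp K a b) = cod2 K a) \<and>
    (\<forall>a\<in>cells K. vcomp K (id2 K (cod2 K a)) a = a \<and> vcomp K a (id2 K (dom2 K a)) = a) \<and>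
    (\<forall>a\<in>cells K. \<forall>b\<in>cells K. \<forall>c\<in>cells K. dom2 K a = cod2 K b \<longrightarrow> dom2 K b = cod2 K c \<longrightarrow>
        vcomp K a (vcomp K b c) = vcomp K (vcomp K a b) c) \<and>
    \<comment> \<open>horizontal composition\<close>
    (\<forall>a\<in>cells K. \<forall>b\<in>cells K. src K (dom2 K a) = trg K (dom2 K b) \<longrightarrow>
        hcomp K a b \<in> cells K \<and> dom2 K (hcomp K a b) = comp1 K (dom2 K a) (dom2 K b) \<and>
        cod2 K (hcomp K a b) = comp1 K (cod2 K a) (cod2 K b)) \<and>
    (\<forall>a\<in>cells K. hcomp K (id2 K (id1 K (trg K (dom2 K a)))) a = a \<and>
        hcomp K a (id2 K (id1 K (src K (dom2 K a)))) = a) \<and>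
    (\<forall>a\<in>cells K. \<forall>b\<in>cells K. \<forall>c\<in>cells K. src K (dom2 K a) = trg K (dom2 K b) \<longrightarrow>
        src K (dom2 K b) = trg K (dom2 K c) \<longrightarrow>
        hcomp K a (hcomp K b c) = hcomp K (hcomp K a b) c) \<and>
    (\<forall>f\<in>arrs K. \<forall>g\<in>arrs K. src K f = trg K g \<longrightarrow>
        hcomp K (id2 K f) (id2 K g) = id2 K (comp1 K f g)) \<and>
    \<comment> \<open>interchange law\<close>
    (\<forall>a\<in>cells K. \<forall>b\<in>cells K. \<forall>c\<in>cells K. \<forall>d\<in>cells K.
        dom2 K a = cod2 K b \<longrightarrow> dom2 K c = cod2 K d \<longrightarrow> src K (dom2 K a) = trg K (dom2 K c) \<longrightarrow>
        hcomp K (vcomp K a b) (vcomp K c d) = vcomp K (hcomp K a c) (hcomp K b d))"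

definition endo_data :: "('o, 'a, 'c, 'z) two_cat_scheme \<Rightarrow> 'o \<Rightarrow> 'a \<Rightarrow> 'c \<Rightarrow> 'c \<Rightarrow> bool" where
  "endo_data K k t mu eta \<longleftrightarrow>
     k \<in> obs K \<and> t \<in> arrs K \<and> src K t = k \<and> trg K t = k \<and>
     mu \<in> cells K \<and> dom2 K mu = comp1 K t t \<and> cod2 K mu = t \<and>
     eta \<in> cells K \<and> dom2 K eta = id1 K k \<and> cod2 K eta = t"

definition pre_monad :: "('o, 'a, 'c, 'z) two_cat_scheme \<Rightarrow> 'o \<Rightarrow> 'a \<Rightarrow> 'c \<Rightarrow> 'c \<Rightarrow> bool" where
  "pre_monad K k t mu eta \<longleftrightarrow>
     endo_data K k t mu eta \<and>
     vcomp K mu (hcomp K mu (id2 K t)) = vcomp K mu (hcomp K (id2 K t) mu) \<and>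
     vcomp K mu (hcomp K eta (id2 K t)) = vcomp K mu (hcomp K (id2 K t) eta) \<and>
     vcomp K mu (hcomp K eta eta) = eta \<and>
     vcomp K mu (vcomp K (hcomp K mu (id2 K t)) (hcomp K eta (id2 K (comp1 K t t)))) = mu"

definition monad :: "('o, 'a, 'c, 'z) two_cat_scheme \<Rightarrow> 'o \<Rightarrow> 'a \<Rightarrow> 'c \<Rightarrow> 'c \<Rightarrow> bool" where
  "monad K k t mu eta \<longleftrightarrow>
     endo_data K k t mu eta \<and>
     vcomp K mu (hcomp K mu (id2 K t)) = vcomp K mu (hcomp K (id2 K t) mu) \<and>
     vcomp K mu (hcomp K eta (id2 K t)) = id2 K t \<and>
     vcomp K mu (hcomp K (id2 K t) eta) = id2 K t"

definition idempotent2 :: "('o, 'a, 'c, 'z) two_cat_scheme \<Rightarrow> 'c \<Rightarrow> bool" where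
  "idempotent2 K e \<longleftrightarrow> e \<in> cells K \<and> dom2 K e = cod2 K e \<and> vcomp K e e = e"

end

theory Submission
  imports Defs
begin

text \<open>Write \<open>e = \<mu> \<ast> \<eta>t\<close>. Naturality of \<open>\<eta>\<close> rewrites \<open>\<eta>t \<ast> \<mu>\<close> as \<open>t\<mu> \<ast> \<eta>tt\<close>, so associativity
and the last pre-monad axiom give \<open>e \<ast> \<mu> = \<mu>\<close>, whence \<open>e \<ast> e = e\<close>. If \<open>e = \<iota> \<ast> \<pi>\<close> with
\<open>\<pi> \<ast> \<iota> = 1\<close>, then \<open>\<iota> \<ast> \<pi>\<close> fixes every 2-cell that \<open>e\<close> fixes, in particular \<open>\<eta>\<close> and
\<open>\<mu> \<ast> \<iota>\<iota>\<close>. By interchange this strips the hats off the monad laws: associativity of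
the new multiplication reduces to that of \<open>\<mu>\<close>, and both unit laws reduce to \<open>\<pi> \<ast> e \<ast> \<iota> = \<pi> \<ast> \<iota> \<ast> \<pi> \<ast> \<iota> = 1\<close>
(the right one after trading \<open>\<mu> \<ast> t\<eta>\<close> for \<open>\<mu> \<ast> \<eta>t\<close>).\<close>

locale strict_two_category =
  fixes K :: "('o, 'a, 'c, 'z) two_cat_scheme"
  assumes two_category: "two_category K"
begin

lemma obj_src [simp]: "f \<in> arrs K \<Longrightarrow> src K f \<in> obs K"
  and obj_trg [simp]: "f \<in> arrs K \<Longrightarrow> trg K f \<in> obs K"
  using two_category unfolding two_category_def by (auto simp only:)

lemma arr_id1 [simp]: "x \<in> obs K \<Longrightarrow> id1 K x \<in> arrs K"
  and src_id1 [simp]: "x \<in> obs K \<Longrightarrow> src K (id1 K x) = x"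
  and trg_id1 [simp]: "x \<in> obs K \<Longrightarrow> trg K (id1 K x) = x"
  using two_category unfolding two_category_def by (auto simp only:)

lemma arr_comp1 [simp]: "f \<in> arrs K \<Longrightarrow> g \<in> arrs K \<Longrightarrow> src K g = trg K f \<Longrightarrow> comp1 K g f \<in> arrs K"
  and src_comp1 [simp]: "f \<in> arrs K \<Longrightarrow> g \<in> arrs K \<Longrightarrow> src K g = trg K f \<Longrightarrow> src K (comp1 K g f) = src K f"
  and trg_comp1 [simp]: "f \<in> arrs K \<Longrightarrow> g \<in> arrs K \<Longrightarrow> src K g = trg K f \<Longrightarrow> trg K (comp1 K g f) = trg K g"
  using two_category unfolding two_category_def by (auto simp only:)

lemma comp1_id1_left [simp]: "f \<in> arrs K \<Longrightarrow> trg K f = x \<Longrightarrow> comp1 K (id1 K x) f = f"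
  and comp1_id1_right [simp]: "f \<in> arrs K \<Longrightarrow> src K f = x \<Longrightarrow> comp1 K f (id1 K x) = f"
  using two_category unfolding two_category_def by (auto simp only:)

lemma comp1_assoc:
  "f \<in> arrs K \<Longrightarrow> g \<in> arrs K \<Longrightarrow> h \<in> arrs K \<Longrightarrow> src K g = trg K f \<Longrightarrow> src K h = trg K g \<Longrightarrow>
   comp1 K h (comp1 K g f) = comp1 K (comp1 K h g) f"
  using two_category unfolding two_category_def by (auto simp only:)

lemma arr_dom2 [simp]: "a \<in> cells K \<Longrightarrow> dom2 K a \<in> arrs K"
  and arr_cod2 [simp]: "a \<in> cells K \<Longrightarrow> cod2 K a \<in> arrs K"
  and src_cod2 [simp]: "a \<in> cells K \<Longrightarrow> src K (cod2 K a) = src K (dom2 K a)"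
  and trg_cod2 [simp]: "a \<in> cells K \<Longrightarrow> trg K (cod2 K a) = trg K (dom2 K a)"
  using two_category unfolding two_category_def by (auto simp only:)

lemma cell_id2 [simp]: "f \<in> arrs K \<Longrightarrow> id2 K f \<in> cells K"
  and dom2_id2 [simp]: "f \<in> arrs K \<Longrightarrow> dom2 K (id2 K f) = f"
  and cod2_id2 [simp]: "f \<in> arrs K \<Longrightarrow> cod2 K (id2 K f) = f"
  using two_category unfolding two_category_def by (auto simp only:)

lemma cell_vcomp [simp]: "a \<in> cells K \<Longrightarrow> b \<in> cells K \<Longrightarrow> dom2 K a = cod2 K b \<Longrightarrow> vcomp K a b \<in> cells K"
  and dom2_vcomp [simp]: "a \<in> cells K \<Longrightarrow> b \<in> cells K \<Longrightarrow> dom2 K a = cod2 K b \<Longrightarrow> dom2 K (vcomp K a b) = dom2 K b"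
  and cod2_vcomp [simp]: "a \<in> cells K \<Longrightarrow> b \<in> cells K \<Longrightarrow> dom2 K a = cod2 K b \<Longrightarrow> cod2 K (vcomp K a b) = cod2 K a"
  using two_category unfolding two_category_def by (auto simp only:)

lemma vcomp_id2_left [simp]: "a \<in> cells K \<Longrightarrow> cod2 K a = f \<Longrightarrow> vcomp K (id2 K f) a = a"
  and vcomp_id2_right [simp]: "a \<in> cells K \<Longrightarrow> dom2 K a = f \<Longrightarrow> vcomp K a (id2 K f) = a"
  using two_category unfolding two_category_def by (auto simp only:)

lemma vcomp_assoc:
  "a \<in> cells K \<Longrightarrow> b \<in> cells K \<Longrightarrow> c \<in> cells K \<Longrightarrow> dom2 K a = cod2 K b \<Longrightarrow> dom2 K b = cod2 K c \<Longrightarrow>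
   vcomp K a (vcomp K b c) = vcomp K (vcomp K a b) c"
  using two_category unfolding two_category_def by blast

lemma cell_hcomp [simp]:
    "a \<in> cells K \<Longrightarrow> b \<in> cells K \<Longrightarrow> src K (dom2 K a) = trg K (dom2 K b) \<Longrightarrow> hcomp K a b \<in> cells K"
  and dom2_hcomp [simp]: "a \<in> cells K \<Longrightarrow> b \<in> cells K \<Longrightarrow> src K (dom2 K a) = trg K (dom2 K b) \<Longrightarrow>
    dom2 K (hcomp K a b) = comp1 K (dom2 K a) (dom2 K b)"
  and cod2_hcomp [simp]: "a \<in> cells K \<Longrightarrow> b \<in> cells K \<Longrightarrow> src K (dom2 K a) = trg K (dom2 K b) \<Longrightarrow>
    cod2 K (hcomp K a b) = comp1 K (cod2 K a) (cod2 K b)"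
  using two_category unfolding two_category_def by (auto simp only:)

lemma hcomp_id2_id1_left [simp]: "a \<in> cells K \<Longrightarrow> trg K (dom2 K a) = x \<Longrightarrow> hcomp K (id2 K (id1 K x)) a = a"
  and hcomp_id2_id1_right [simp]: "a \<in> cells K \<Longrightarrow> src K (dom2 K a) = x \<Longrightarrow> hcomp K a (id2 K (id1 K x)) = a"
  using two_category unfolding two_category_def by (auto simp only:)

lemma hcomp_assoc:
  "a \<in> cells K \<Longrightarrow> b \<in> cells K \<Longrightarrow> c \<in> cells K \<Longrightarrow> src K (dom2 K a) = trg K (dom2 K b) \<Longrightarrow>
   src K (dom2 K b) = trg K (dom2 K c) \<Longrightarrow> hcomp K a (hcomp K b c) = hcomp K (hcomp K a b) c"
  using two_category unfolding two_category_def by blast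

lemma interchange:
  "a \<in> cells K \<Longrightarrow> b \<in> cells K \<Longrightarrow> c \<in> cells K \<Longrightarrow> d \<in> cells K \<Longrightarrow>
   dom2 K a = cod2 K b \<Longrightarrow> dom2 K c = cod2 K d \<Longrightarrow> src K (dom2 K a) = trg K (dom2 K c) \<Longrightarrow>
   hcomp K (vcomp K a b) (vcomp K c d) = vcomp K (hcomp K a c) (hcomp K b d)"
  using two_category unfolding two_category_def by blast

lemma hcomp_eq_whisker_vcomp_whisker:
  assumes "a \<in> cells K" "b \<in> cells K" "src K (dom2 K a) = trg K (dom2 K b)"
  shows "hcomp K a b = vcomp K (hcomp K a (id2 K (cod2 K b))) (hcomp K (id2 K (dom2 K a)) b)"
  using assms interchange[of a "id2 K (dom2 K a)" "id2 K (cod2 K b)" b] by simp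

lemma hcomp_eq_whisker_vcomp_whisker':
  assumes "a \<in> cells K" "b \<in> cells K" "src K (dom2 K a) = trg K (dom2 K b)"
  shows "hcomp K a b = vcomp K (hcomp K (id2 K (cod2 K a)) b) (hcomp K a (id2 K (dom2 K b)))"
  using assms interchange[of "id2 K (cod2 K a)" a b "id2 K (dom2 K b)"] by simp

lemma hcomp_eq_vcomp_whisker_left:
  assumes "a \<in> cells K" "b \<in> cells K" "dom2 K a = id1 K (trg K (dom2 K b))"
  shows "hcomp K a b = vcomp K (hcomp K a (id2 K (cod2 K b))) b"
  using assms hcomp_eq_whisker_vcomp_whisker[of a b] by simp

lemma hcomp_eq_vcomp_whisker_right:
  assumes "a \<in> cells K" "b \<in> cells K" "dom2 K b = id1 K (src K (dom2 K a))"
  shows "hcomp K a b = vcomp K (hcomp K (id2 K (cod2 K a)) b) a"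
  using assms hcomp_eq_whisker_vcomp_whisker'[of a b] by simp

lemma hcomp_vcomp_whisker_left:
  assumes "c \<in> cells K" "d \<in> cells K" "a \<in> cells K" "dom2 K c = cod2 K a"
    and "src K (dom2 K c) = trg K (dom2 K d)"
  shows "vcomp K (hcomp K c d) (hcomp K a (id2 K (dom2 K d))) = hcomp K (vcomp K c a) d"
  using assms interchange[of c a d "id2 K (dom2 K d)"] by simp

lemma hcomp_vcomp_whisker_right:
  assumes "c \<in> cells K" "d \<in> cells K" "b \<in> cells K" "dom2 K d = cod2 K b"
    and "src K (dom2 K c) = trg K (dom2 K d)"
  shows "vcomp K (hcomp K c d) (hcomp K (id2 K (dom2 K c)) b) = hcomp K c (vcomp K d b)"
  using assms interchange[of c "id2 K (dom2 K c)" d b] by simp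

end

locale pre_monad_in_two_category = strict_two_category +
  fixes k t mu eta
  assumes pre_monad: "pre_monad K k t mu eta"
begin

lemma obj_k [simp]: "k \<in> obs K"
  and arr_t [simp]: "t \<in> arrs K" and src_t [simp]: "src K t = k" and trg_t [simp]: "trg K t = k"
  and cell_mu [simp]: "mu \<in> cells K" and dom2_mu [simp]: "dom2 K mu = comp1 K t t"
  and cod2_mu [simp]: "cod2 K mu = t"
  and cell_eta [simp]: "eta \<in> cells K" and dom2_eta [simp]: "dom2 K eta = id1 K k"
  and cod2_eta [simp]: "cod2 K eta = t"
  using pre_monad unfolding pre_monad_def endo_data_def by auto

lemma mu_assoc: "vcomp K mu (hcomp K mu (id2 K t)) = vcomp K mu (hcomp K (id2 K t) mu)"
  and mu_eta_whisker_left_right: "vcomp K mu (hcomp K eta (id2 K t)) = vcomp K mu (hcomp K (id2 K t) eta)"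
  and mu_eta_eta: "vcomp K mu (hcomp K eta eta) = eta"
  and mu_mu_eta_whisker:
    "vcomp K mu (vcomp K (hcomp K mu (id2 K t)) (hcomp K eta (id2 K (comp1 K t t)))) = mu"
  using pre_monad unfolding pre_monad_def by auto

definition unit_idem :: 'c where
  "unit_idem = vcomp K mu (hcomp K eta (id2 K t))"

lemma cell_unit_idem [simp]: "unit_idem \<in> cells K"
  and dom2_unit_idem [simp]: "dom2 K unit_idem = t"
  and cod2_unit_idem [simp]: "cod2 K unit_idem = t"
  unfolding unit_idem_def by simp_all

lemma eta_whisker_naturality:
  "vcomp K (hcomp K eta (id2 K t)) mu = vcomp K (hcomp K (id2 K t) mu) (hcomp K eta (id2 K (comp1 K t t)))"
  using hcomp_eq_vcomp_whisker_left[of eta mu] hcomp_eq_whisker_vcomp_whisker'[of eta mu] by simp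

lemma unit_idem_vcomp_mu: "vcomp K unit_idem mu = mu"
proof -
  have "vcomp K unit_idem mu = vcomp K mu (vcomp K (hcomp K eta (id2 K t)) mu)"
    unfolding unit_idem_def by (simp add: vcomp_assoc)
  also have "\<dots> = vcomp K (vcomp K mu (hcomp K mu (id2 K t))) (hcomp K eta (id2 K (comp1 K t t)))"
    unfolding eta_whisker_naturality mu_assoc by (simp add: vcomp_assoc)
  also have "\<dots> = mu"
    using mu_mu_eta_whisker by (simp add: vcomp_assoc comp1_assoc)
  finally show ?thesis .
qed

lemma unit_idem_vcomp_eta: "vcomp K unit_idem eta = eta"
  using hcomp_eq_vcomp_whisker_left[of eta eta] mu_eta_eta
  unfolding unit_idem_def by (simp add: vcomp_assoc)

lemma idempotent_unit_idem: "idempotent2 K unit_idem"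
  using unit_idem_vcomp_mu unfolding idempotent2_def
  by (simp add: unit_idem_def vcomp_assoc)

end

locale split_pre_monad = pre_monad_in_two_category +
  fixes th pi iota
  assumes arr_th [simp]: "th \<in> arrs K" and src_th [simp]: "src K th = k" and trg_th [simp]: "trg K th = k"
    and cell_pi [simp]: "pi \<in> cells K" and dom2_pi [simp]: "dom2 K pi = t" and cod2_pi [simp]: "cod2 K pi = th"
    and cell_iota [simp]: "iota \<in> cells K" and dom2_iota [simp]: "dom2 K iota = th"
    and cod2_iota [simp]: "cod2 K iota = t"
    and iota_pi: "vcomp K iota pi = unit_idem"
    and pi_iota: "vcomp K pi iota = id2 K th"
begin

definition hat_mu :: 'c where
  "hat_mu = vcomp K pi (vcomp K mu (hcomp K iota iota))"

definition hat_eta :: 'c where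
  "hat_eta = vcomp K pi eta"

lemma cell_hat_mu [simp]: "hat_mu \<in> cells K"
  and dom2_hat_mu [simp]: "dom2 K hat_mu = comp1 K th th"
  and cod2_hat_mu [simp]: "cod2 K hat_mu = th"
  unfolding hat_mu_def by simp_all

lemma cell_hat_eta [simp]: "hat_eta \<in> cells K"
  and dom2_hat_eta [simp]: "dom2 K hat_eta = id1 K k"
  and cod2_hat_eta [simp]: "cod2 K hat_eta = th"
  unfolding hat_eta_def by simp_all

lemma iota_pi_fixes:
  assumes "a \<in> cells K" "cod2 K a = t" "vcomp K unit_idem a = a"
  shows "vcomp K iota (vcomp K pi a) = a"
  using assms by (simp add: vcomp_assoc iota_pi)

lemma pi_unit_idem_iota: "vcomp K pi (vcomp K unit_idem iota) = id2 K th"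
  by (simp add: vcomp_assoc flip: iota_pi) (simp add: pi_iota)

lemma hat_unit_left: "vcomp K hat_mu (hcomp K hat_eta (id2 K th)) = id2 K th"
proof -
  have "vcomp K (hcomp K iota iota) (hcomp K hat_eta (id2 K th)) = hcomp K eta iota"
    using hcomp_vcomp_whisker_left[of iota iota hat_eta] iota_pi_fixes[of eta]
    by (simp add: hat_eta_def unit_idem_vcomp_eta)
  also have "\<dots> = vcomp K (hcomp K eta (id2 K t)) iota"
    using hcomp_eq_vcomp_whisker_left[of eta iota] by simp
  finally have whisker:
    "vcomp K (hcomp K iota iota) (hcomp K hat_eta (id2 K th)) = vcomp K (hcomp K eta (id2 K t)) iota" .
  have "vcomp K hat_mu (hcomp K hat_eta (id2 K th)) =
      vcomp K pi (vcomp K mu (vcomp K (hcomp K iota iota) (hcomp K hat_eta (id2 K th))))"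
    by (simp add: hat_mu_def vcomp_assoc)
  also have "\<dots> = vcomp K pi (vcomp K unit_idem iota)"
    unfolding whisker by (simp add: unit_idem_def vcomp_assoc)
  finally show ?thesis
    using pi_unit_idem_iota by simp
qed

lemma hat_unit_right: "vcomp K hat_mu (hcomp K (id2 K th) hat_eta) = id2 K th"
proof -
  have "vcomp K (hcomp K iota iota) (hcomp K (id2 K th) hat_eta) = hcomp K iota eta"
    using hcomp_vcomp_whisker_right[of iota iota hat_eta] iota_pi_fixes[of eta]
    by (simp add: hat_eta_def unit_idem_vcomp_eta)
  also have "\<dots> = vcomp K (hcomp K (id2 K t) eta) iota"
    using hcomp_eq_vcomp_whisker_right[of iota eta] by simp
  finally have whisker:
    "vcomp K (hcomp K iota iota) (hcomp K (id2 K th) hat_eta) = vcomp K (hcomp K (id2 K t) eta) iota" .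
  have "vcomp K hat_mu (hcomp K (id2 K th) hat_eta) =
      vcomp K pi (vcomp K mu (vcomp K (hcomp K iota iota) (hcomp K (id2 K th) hat_eta)))"
    by (simp add: hat_mu_def vcomp_assoc)
  also have "\<dots> = vcomp K pi (vcomp K unit_idem iota)"
    unfolding whisker unit_idem_def mu_eta_whisker_left_right by (simp add: vcomp_assoc)
  finally show ?thesis
    using pi_unit_idem_iota by simp
qed

lemma hat_assoc:
  "vcomp K hat_mu (hcomp K hat_mu (id2 K th)) = vcomp K hat_mu (hcomp K (id2 K th) hat_mu)"
proof -
  define m where "m = vcomp K mu (hcomp K iota iota)"
  have m: "m \<in> cells K" "dom2 K m = comp1 K th th" "cod2 K m = t"
    unfolding m_def by simp_all
  have iota_pi_m: "vcomp K iota (vcomp K pi m) = m"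
    unfolding m_def by (rule iota_pi_fixes) (simp_all add: vcomp_assoc unit_idem_vcomp_mu)
  have hat_mu_m: "hat_mu = vcomp K pi m"
    unfolding hat_mu_def m_def ..
  have "vcomp K (hcomp K iota iota) (hcomp K hat_mu (id2 K th)) = hcomp K m iota"
    using hcomp_vcomp_whisker_left[of iota iota "vcomp K pi m"] m iota_pi_m by (simp add: hat_mu_m)
  also have "\<dots> = vcomp K (hcomp K mu (id2 K t)) (hcomp K (hcomp K iota iota) iota)"
    using interchange[of mu "hcomp K iota iota" "id2 K t" iota] by (simp add: m_def)
  finally have whisker_left:
    "vcomp K (hcomp K iota iota) (hcomp K hat_mu (id2 K th)) =
     vcomp K (hcomp K mu (id2 K t)) (hcomp K (hcomp K iota iota) iota)" .
  have "vcomp K (hcomp K iota iota) (hcomp K (id2 K th) hat_mu) = hcomp K iota m"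
    using hcomp_vcomp_whisker_right[of iota iota "vcomp K pi m"] m iota_pi_m by (simp add: hat_mu_m)
  also have "\<dots> = vcomp K (hcomp K (id2 K t) mu) (hcomp K iota (hcomp K iota iota))"
    using interchange[of "id2 K t" iota mu "hcomp K iota iota"] by (simp add: m_def)
  finally have whisker_right:
    "vcomp K (hcomp K iota iota) (hcomp K (id2 K th) hat_mu) =
     vcomp K (hcomp K (id2 K t) mu) (hcomp K iota (hcomp K iota iota))" .
  have "vcomp K hat_mu (hcomp K hat_mu (id2 K th)) =
      vcomp K pi (vcomp K mu (vcomp K (hcomp K iota iota) (hcomp K hat_mu (id2 K th))))"
    by (simp add: hat_mu_def vcomp_assoc)
  also have "\<dots> = vcomp K pi (vcomp K (vcomp K mu (hcomp K mu (id2 K t))) (hcomp K (hcomp K iota iota) iota))"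
    unfolding whisker_left by (simp add: vcomp_assoc comp1_assoc)
  also have "\<dots> = vcomp K pi (vcomp K (vcomp K mu (hcomp K (id2 K t) mu)) (hcomp K iota (hcomp K iota iota)))"
    unfolding mu_assoc by (simp add: hcomp_assoc)
  also have "\<dots> = vcomp K pi (vcomp K mu (vcomp K (hcomp K iota iota) (hcomp K (id2 K th) hat_mu)))"
    unfolding whisker_right by (simp add: vcomp_assoc comp1_assoc)
  also have "\<dots> = vcomp K hat_mu (hcomp K (id2 K th) hat_mu)"
    by (simp add: hat_mu_def vcomp_assoc)
  finally show ?thesis .
qed

lemma monad_hat: "monad K k th hat_mu hat_eta"
  unfolding monad_def endo_data_def using hat_assoc hat_unit_left hat_unit_right by simp

end

theorem lemma2p2:
  fixes K :: "('o, 'a, 'c, 'z) two_cat_scheme"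
  assumes "two_category K"
    and "pre_monad K k t mu eta"
  shows "idempotent2 K (vcomp K mu (hcomp K eta (id2 K t))) \<and>
         (\<forall>th pi iota.
            th \<in> arrs K \<and> src K th = k \<and> trg K th = k \<and>
            pi \<in> cells K \<and> dom2 K pi = t \<and> cod2 K pi = th \<and>
            iota \<in> cells K \<and> dom2 K iota = th \<and> cod2 K iota = t \<and>
            vcomp K mu (hcomp K eta (id2 K t)) = vcomp K iota pi \<and>
            vcomp K pi iota = id2 K th \<longrightarrow>
          monad K k th (vcomp K pi (vcomp K mu (hcomp K iota iota))) (vcomp K pi eta))"
proof -
  interpret pre_monad_in_two_category K k t mu eta
    using assms by unfold_locales
  show ?thesis
  proof (intro conjI allI impI)
    show "idempotent2 K (vcomp K mu (hcomp K eta (id2 K t)))"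
      using idempotent_unit_idem unfolding unit_idem_def .
  next
    fix th pi iota
    assume "th \<in> arrs K \<and> src K th = k \<and> trg K th = k \<and>
            pi \<in> cells K \<and> dom2 K pi = t \<and> cod2 K pi = th \<and>
            iota \<in> cells K \<and> dom2 K iota = th \<and> cod2 K iota = t \<and>
            vcomp K mu (hcomp K eta (id2 K t)) = vcomp K iota pi \<and>
            vcomp K pi iota = id2 K th"
    then interpret split_pre_monad K k t mu eta th pi iota
      by unfold_locales (auto simp: unit_idem_def)
    show "monad K k th (vcomp K pi (vcomp K mu (hcomp K iota iota))) (vcomp K pi eta)"
      using monad_hat unfolding hat_mu_def hat_eta_def .
  qed
qed

end
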